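(* For every $n\ge 1$ and every $A$ as in the context there exists $\mathrm{Single}(n,A)\in A\cup\{\infty\}$ such that, for every positive integer $x$, the position $P_x$ of $\mathrm{AGG}(n,A)$ consisting of one tile of value $x$ and $n-1$ empty cells is reachable if and only if $x\in A$ and $x\le \mathrm{Single}(n,A)$. In particular, if $\mathrm{Single}(n,A)$ is finite it is the largest value of a single tile achievable in $\mathrm{AGG}(n,A)$, and if it is $\infty$ then every value in $A$ is achievable as a single tile.
   Context: Let $A$ be a set of positive integers with $1\in A$ (the allowed tile values). For an integer $n\ge 0$, the abstract generalized 2048 game $\mathrm{AGG}(n,A)$ is played on $n$ indistinguishable cells. A position assigns to each cell either nothing (the cell is empty) or a tile carrying a value in $A$. The initial position has all cells empty. A step, which can be performed from any position having at least one empty cell, consists of: (i) placing a new tile of value $1$ into a chosen empty cell; then (ii) optionally choosing any collection of pairwise disjoint sets of nonempty cells such that the sum of the tile values in each chosen set belongs to $A$, and merging each chosen set into a single tile, whose value is that sum, placed in one cell of the set, the other cells of the set becoming empty. The game ends when, after a step, all cells are nonempty (no further step is then possible). A position is reachable if it can be obtained from the initial position by a finite sequence of steps. *)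

theory Defs
  imports Main "HOL-Library.Multiset" "HOL-Library.Extended_Nat"
begin

text \<open>Since cells are indistinguishable, a position of AGG(n,A) is represented by the
multiset of tile values on the nonempty cells; the number of empty cells is
n minus the size of this multiset.\<close>

definition agg_step :: "nat \<Rightarrow> nat set \<Rightarrow> nat multiset \<Rightarrow> nat multiset \<Rightarrow> bool" where
  "agg_step n A M M' \<longleftrightarrow>
     size M < n \<and>
     (\<exists>R Ss. M + {#1#} = R + sum_list Ss \<and>
             (\<forall>S\<in>set Ss. S \<noteq> {#} \<and> sum_mset S \<in> A) \<and>
             M' = R + mset (map sum_mset Ss))"

definition agg_reachable :: "nat \<Rightarrow> nat set \<Rightarrow> nat multiset \<Rightarrow> bool" where
  "agg_reachable n A M \<longleftrightarrow> (agg_step n A)\<^sup>*\<^sup>* {#} M"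

end

theory Submission
  imports Defs
begin

text \<open>Every step raises the total tile value by exactly one and needs an empty cell, so a
run reaching total \<open>t\<close> passes through a position of every total \<open>k < t\<close> that still has an
empty cell; placing the new tile there and merging everything yields the single tile
\<open>k + 1\<close> whenever \<open>k + 1 \<in> A\<close>. Hence the reachable single values form an initial segment
of \<open>A\<close> containing \<open>1\<close>, and \<open>Single(n,A)\<close> is its supremum.\<close>

lemma sum_mset_sum_list_msets: "sum_mset (sum_list Ms) = sum_list (map sum_mset Ms)"
  by (induction Ms) auto

lemma agg_step_sum_mset:
  assumes "agg_step n A M M'"
  shows "sum_mset M' = Suc (sum_mset M)"
proof -
  obtain R Ss where split: "M + {#1#} = R + sum_list Ss"
    and merged: "M' = R + mset (map sum_mset Ss)"
    using assms unfolding agg_step_def by blast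
  have "Suc (sum_mset M) = sum_mset R + sum_list (map sum_mset Ss)"
    using arg_cong[OF split, of sum_mset] by (simp add: sum_mset_sum_list_msets)
  also have "\<dots> = sum_mset M'"
    using merged by (simp flip: sum_mset_sum_list)
  finally show ?thesis ..
qed

lemma agg_step_tiles_in:
  assumes "agg_step n A M M'" "set_mset M \<subseteq> A" "1 \<in> A"
  shows "set_mset M' \<subseteq> A"
proof -
  obtain R Ss where split: "M + {#1#} = R + sum_list Ss"
    and sums: "\<forall>S\<in>set Ss. sum_mset S \<in> A"
    and merged: "M' = R + mset (map sum_mset Ss)"
    using assms(1) unfolding agg_step_def by blast
  have "set_mset R \<subseteq> set_mset (M + {#1#})"
    using split by simp
  then show ?thesis
    using assms(2,3) sums merged by auto
qed

lemma agg_step_merge_all: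
  assumes "size M < n" "Suc (sum_mset M) \<in> A"
  shows "agg_step n A M {#Suc (sum_mset M)#}"
  unfolding agg_step_def
  using assms by (intro conjI exI[of _ "{#}"] exI[of _ "[M + {#1#}]"]) auto

lemma agg_reachable_step:
  "agg_reachable n A M \<Longrightarrow> agg_step n A M M' \<Longrightarrow> agg_reachable n A M'"
  unfolding agg_reachable_def by (rule rtranclp.rtrancl_into_rtrancl)

lemma agg_reachable_tiles_in:
  assumes "agg_reachable n A M" "1 \<in> A"
  shows "set_mset M \<subseteq> A"
  using assms(1) unfolding agg_reachable_def
  by (induction rule: rtranclp_induct) (simp, metis agg_step_tiles_in assms(2))

lemma agg_reachable_lower_total:
  assumes "agg_reachable n A M" "k < sum_mset M"
  shows "\<exists>M'. agg_reachable n A M' \<and> sum_mset M' = k \<and> size M' < n"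
  using assms unfolding agg_reachable_def
proof (induction arbitrary: k rule: rtranclp_induct)
  case base
  then show ?case by simp
next
  case (step M M')
  show ?case
  proof (cases "k < sum_mset M")
    case True
    then show ?thesis using step.IH by blast
  next
    case False
    with step.prems have "k = sum_mset M"
      using agg_step_sum_mset[OF step.hyps(2)] by simp
    moreover have "size M < n"
      using step.hyps(2) unfolding agg_step_def by blast
    ultimately show ?thesis using step.hyps(1) by blast
  qed
qed

lemma agg_reachable_single_mono:
  assumes "agg_reachable n A {#x#}" "y \<in> A" "0 < y" "y \<le> x"
  shows "agg_reachable n A {#y#}"
proof -
  have "y - 1 < sum_mset {#x#}"
    using assms(3,4) by simp
  then obtain M where M: "agg_reachable n A M" "sum_mset M = y - 1" "size M < n"
    using agg_reachable_lower_total[OF assms(1)] by blast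
  have "Suc (sum_mset M) = y"
    using M(2) assms(3) by simp
  then show ?thesis
    using agg_reachable_step[OF M(1) agg_step_merge_all[OF M(3)]] assms(2) by simp
qed

lemma agg_reachable_single_one:
  assumes "n \<ge> 1" "1 \<in> A"
  shows "agg_reachable n A {#1#}"
  using agg_reachable_step[of n A "{#}", OF _ agg_step_merge_all] assms
  by (simp add: agg_reachable_def)

lemma initial_segment_threshold:
  fixes S A :: "nat set"
  assumes "S \<subseteq> A" "S \<noteq> {}"
    and downward: "\<And>x y. y \<in> S \<Longrightarrow> x \<in> A \<Longrightarrow> x \<le> y \<Longrightarrow> x \<in> S"
  shows "\<exists>s :: enat. (s = \<infinity> \<or> (\<exists>a\<in>A. s = enat a)) \<and> (\<forall>x. x \<in> S \<longleftrightarrow> x \<in> A \<and> enat x \<le> s)"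
proof (cases "finite S")
  case True
  then have "Max S \<in> S" "\<forall>x\<in>S. x \<le> Max S"
    using assms(2) by auto
  then show ?thesis
    using assms(1) downward by (intro exI[of _ "enat (Max S)"]) auto
next
  case False
  have "x \<in> S" if "x \<in> A" for x
  proof -
    obtain y where "y \<in> S" "x \<le> y"
      using False unfolding infinite_nat_iff_unbounded_le by blast
    then show ?thesis using downward that by blast
  qed
  then show ?thesis
    using assms(1) by (intro exI[of _ \<infinity>]) auto
qed

theorem mainTheorem4:
  fixes n :: nat and A :: "nat set"
  assumes "n \<ge> 1" and "1 \<in> A" and "\<forall>a\<in>A. a > 0"
  shows "\<exists>s :: enat. (s = \<infinity> \<or> (\<exists>a\<in>A. s = enat a)) \<and>
           (\<forall>x::nat. x > 0 \<longrightarrow>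
              (agg_reachable n A {#x#} \<longleftrightarrow> x \<in> A \<and> enat x \<le> s))"
proof -
  let ?S = "{x. agg_reachable n A {#x#}}"
  have "?S \<subseteq> A"
    using agg_reachable_tiles_in assms(2) by fastforce
  moreover have "1 \<in> ?S"
    using agg_reachable_single_one assms(1,2) by simp
  moreover have "x \<in> ?S" if "y \<in> ?S" "x \<in> A" "x \<le> y" for x y
    using agg_reachable_single_mono that assms(3) by simp
  ultimately show ?thesis
    using initial_segment_threshold[of ?S A] by blast
qed

end
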